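(* Let $M$ be an adequate monoid and $\chi:\Sigma\to M$ a function, and let $\rho:UT^1(\Sigma)\to M$ be the map defined below. Then $\rho$ is a morphism of $(2,1,1,0)$-algebras from $UT^1(\Sigma)$ (with unpruned multiplication $\times$, unpruned $(+)$, unpruned $( * )$ and the trivial tree as identity) to $M$; that is, $\rho(X\times Y)=\rho(X)\rho(Y)$, $\rho(X^{(+)})=\rho(X)^+$, $\rho(X^{( * )})=\rho(X)^*$ for all $X,Y$, and $\rho$ maps the trivial tree to $1$.
   Context: Adequate monoid: a monoid $M$ whose idempotents commute and in which every $\mathcal{L}^*$-class and every $\mathcal{R}^*$-class contains an idempotent, where $a\,\mathcal{L}^*\,b$ iff ($ax=ay\Leftrightarrow bx=by$ for all $x,y\in M$) and $a\,\mathcal{R}^*\,b$ iff ($xa=ya\Leftrightarrow xb=yb$ for all $x,y\in M$); $x^+$ and $x^*$ denote the unique idempotents $\mathcal{R}^*$- and $\mathcal{L}^*$-related to $x$. It is regarded as a $(2,1,1,0)$-algebra. Trees: a $\Sigma$-tree is a finite directed graph whose underlying undirected graph is a tree, each edge $e$ having initial vertex $\alpha(e)$, terminal vertex $\omega(e)$ and label $\lambda(e)\in\Sigma$, with distinguished start and end vertices such that there is a (possibly empty) directed path (the trunk) from start to end vertex. Trivial tree: one vertex; idempotent tree: start vertex equals end vertex. $UT^1(\Sigma)$ is the set of isomorphism types (label-, start- and end-preserving graph isomorphisms) of $\Sigma$-trees. Unpruned operations: $X\times Y$ identifies the end vertex of (a copy of) $X$ with the start vertex of (a disjoint copy of) $Y$,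 start vertex that of $X$, end vertex that of $Y$; $X^{(+)}$ is $X$ with end vertex moved to the start vertex; $X^{( * )}$ is $X$ with start vertex moved to the end vertex. The map $\tau$ from idempotent trees to idempotents of $M$ is defined recursively on the number of edges: if $X$ has no edges, $\tau(X)=1$. Otherwise let $v$ be its start (= end) vertex; for an edge $e$ with $\alpha(e)=v$ let $X_e$ be the connected component of $X$ with edge $e$ removed containing $\omega(e)$, viewed as an idempotent tree with start and end vertex $\omega(e)$; for an edge $e$ with $\omega(e)=v$ let $X_e$ be the component of $X$ with $e$ removed containing $\alpha(e)$, viewed as an idempotent tree at $\alpha(e)$. Then $\tau(X)=\prod_{e:\alpha(e)=v}[\chi(\lambda(e))\tau(X_e)]^+\cdot\prod_{e:\omega(e)=v}[\tau(X_e)\chi(\lambda(e))]^*$ (a product of commuting idempotents, independent of order). For an arbitrary tree $X$ with trunk vertices $v_0,\dots,v_n$ in order and $a_i$ the label of the trunk edge from $v_{i-1}$ to $v_i$, let $X_i$ be the connected component containing $v_i$ of $X$ with all trunk edges removed, viewed as an idempotent tree at $v_i$, and set $\rho(X)=\tau(X_0)\chi(a_1)\tau(X_1)\chi(a_2)\cdots\chi(a_n)\tau(X_n)$. *)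

theory Defs
  imports Main
begin

definition Lstar_rel :: "'m::monoid_mult \<Rightarrow> 'm \<Rightarrow> bool" where
  "Lstar_rel a b \<longleftrightarrow> (\<forall>x y. a * x = a * y \<longleftrightarrow> b * x = b * y)"

definition Rstar_rel :: "'m::monoid_mult \<Rightarrow> 'm \<Rightarrow> bool" where
  "Rstar_rel a b \<longleftrightarrow> (\<forall>x y. x * a = y * a \<longleftrightarrow> x * b = y * b)"

definition idem :: "'m::monoid_mult \<Rightarrow> bool" where
  "idem e \<longleftrightarrow> e * e = e"

definition adequate :: "'m::monoid_mult itself \<Rightarrow> bool" where
  "adequate _ \<longleftrightarrow>
     (\<forall>e f :: 'm. idem e \<and> idem f \<longrightarrow> e * f = f * e) \<and>
     (\<forall>a :: 'm. \<exists>e. idem e \<and> Lstar_rel a e) \<and>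
     (\<forall>a :: 'm. \<exists>e. idem e \<and> Rstar_rel a e)"

definition Mplus :: "'m::monoid_mult \<Rightarrow> 'm" where
  "Mplus x = (THE e. idem e \<and> Rstar_rel x e)"

definition Mstar :: "'m::monoid_mult \<Rightarrow> 'm" where
  "Mstar x = (THE e. idem e \<and> Lstar_rel x e)"

text \<open>An idempotent Sigma-tree, rooted at its start (= end) vertex v: the list of edges
  incident to v, each given as (direction, label, component on the other side viewed as an
  idempotent tree rooted at the other endpoint).  Direction True means alpha(e) = v (edge
  leaves the root), False means omega(e) = v (edge enters the root).  Isomorphism types
  correspond to these terms up to reordering of children lists (recursively).\<close>
datatype 's itree = INode "(bool \<times> 's \<times> 's itree) list"

text \<open>A general Sigma-tree, given by its trunk decomposition: (X_0, [(a_1,X_1),...,(a_n,X_n)])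
  where a_i labels the trunk edge v_{i-1} -> v_i and X_i is the idempotent tree hanging at
  the trunk vertex v_i.\<close>
type_synonym 's tree = "'s itree \<times> ('s \<times> 's itree) list"

definition trivial_tree :: "'s tree" where
  "trivial_tree = (INode [], [])"

fun imerge :: "'s itree \<Rightarrow> 's itree \<Rightarrow> 's itree" where
  "imerge (INode cs) (INode ds) = INode (cs @ ds)"

fun iadd :: "'s itree \<Rightarrow> bool \<times> 's \<times> 's itree \<Rightarrow> 's itree" where
  "iadd (INode cs) e = INode (cs @ [e])"

text \<open>Unpruned product: glue the end vertex of X to the start vertex of Y.\<close>
fun tmul :: "'s tree \<Rightarrow> 's tree \<Rightarrow> 's tree" where
  "tmul (X0, []) (Y0, qs) = (imerge X0 Y0, qs)"
| "tmul (X0, (a, X1) # ps) Y = (case tmul (X1, ps) Y of (Z, rs) \<Rightarrow> (X0, (a, Z) # rs))"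

text \<open>Idempotent tree obtained by rooting the whole tree at its start vertex.\<close>
fun plus_root :: "'s itree \<Rightarrow> ('s \<times> 's itree) list \<Rightarrow> 's itree" where
  "plus_root X0 [] = X0"
| "plus_root X0 ((a, X1) # ps) = iadd X0 (True, a, plus_root X1 ps)"

text \<open>Idempotent tree obtained by rooting the whole tree at its end vertex
  (accumulating the part of the trunk already traversed).\<close>
fun star_acc :: "'s itree \<Rightarrow> ('s \<times> 's itree) list \<Rightarrow> 's itree" where
  "star_acc T [] = T"
| "star_acc T ((a, X) # ps) = star_acc (iadd X (False, a, T)) ps"

definition tplus :: "'s tree \<Rightarrow> 's tree" where
  "tplus X = (plus_root (fst X) (snd X), [])"

definition tstar :: "'s tree \<Rightarrow> 's tree" where
  "tstar X = (star_acc (fst X) (snd X), [])"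

fun tau :: "('s \<Rightarrow> 'm::monoid_mult) \<Rightarrow> 's itree \<Rightarrow> 'm" where
  "tau \<chi> (INode cs) =
     prod_list (map (\<lambda>e. if fst e then Mplus (\<chi> (fst (snd e)) * tau \<chi> (snd (snd e)))
                          else Mstar (tau \<chi> (snd (snd e)) * \<chi> (fst (snd e)))) cs)"

definition rho :: "('s \<Rightarrow> 'm::monoid_mult) \<Rightarrow> 's tree \<Rightarrow> 'm" where
  "rho \<chi> X = tau \<chi> (fst X) * prod_list (map (\<lambda>p. \<chi> (fst p) * tau \<chi> (snd p)) (snd X))"

end

theory Submission
  imports Defs
begin

text \<open>Every \<open>\<tau>(X)\<close> is a product of commuting idempotents, and \<open>\<rho>\<close> reads a tree
  along its trunk, so \<open>\<rho>(X \<times> Y) = \<rho>(X)\<rho>(Y)\<close> is just associativity. Moving the end vertex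
  back to the start turns the trunk, edge by edge from the end, into nested outgoing branches;
  in an adequate monoid \<open>(a b\<^sup>+)\<^sup>+ = (a b)\<^sup>+\<close> and \<open>(e a)\<^sup>+ = e a\<^sup>+\<close> for idempotent \<open>e\<close>, which is
  exactly what is needed to absorb one trunk edge into the branch hanging below it. Moving the
  start vertex to the end is the left-right dual.\<close>

lemma Rstar_rel_mult_left: "Rstar_rel a b \<Longrightarrow> Rstar_rel (c * a) (c * b)"
  unfolding Rstar_rel_def by (simp add: mult.assoc[symmetric])

lemma Lstar_rel_mult_right: "Lstar_rel a b \<Longrightarrow> Lstar_rel (a * c) (b * c)"
  unfolding Lstar_rel_def by (simp add: mult.assoc)

lemma idem_Rstar_rel_eq:
  assumes "idem e" "idem f" "e * f = f * e" "Rstar_rel e f"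
  shows "e = f"
proof -
  have "e * f = f" using assms(1,4) unfolding idem_def Rstar_rel_def by (metis mult_1_left)
  moreover have "f * e = e" using assms(2,4) unfolding idem_def Rstar_rel_def by (metis mult_1_left)
  ultimately show ?thesis using assms(3) by simp
qed

lemma idem_Lstar_rel_eq:
  assumes "idem e" "idem f" "e * f = f * e" "Lstar_rel e f"
  shows "e = f"
proof -
  have "f * e = f" using assms(1,4) unfolding idem_def Lstar_rel_def by (metis mult_1_right)
  moreover have "e * f = e" using assms(2,4) unfolding idem_def Lstar_rel_def by (metis mult_1_right)
  ultimately show ?thesis using assms(3) by simp
qed

lemma commute_prod_list:
  "(\<And>f. f \<in> set xs \<Longrightarrow> e * f = f * e) \<Longrightarrow> e * prod_list xs = prod_list xs * (e :: 'm::monoid_mult)"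
proof (induction xs)
  case (Cons f xs)
  have "e * (f * prod_list xs) = (f * e) * prod_list xs"
    using Cons.prems by (simp add: mult.assoc[symmetric])
  also have "\<dots> = (f * prod_list xs) * e"
    using Cons by (simp add: mult.assoc)
  finally show ?case by simp
qed simp

lemma idem_prod_list:
  assumes "\<And>e f. e \<in> set xs \<Longrightarrow> f \<in> set xs \<Longrightarrow> e * f = f * e"
    and "\<And>e. e \<in> set xs \<Longrightarrow> idem (e :: 'm::monoid_mult)"
  shows "idem (prod_list xs)"
  using assms
proof (induction xs)
  case (Cons e xs)
  have "prod_list xs * e = e * prod_list xs"
    using commute_prod_list[of xs e] Cons.prems(1) by simp
  then have "(e * prod_list xs) * (e * prod_list xs) = (e * e) * (prod_list xs * prod_list xs)"
    by (simp add: mult.assoc) (simp add: mult.assoc[symmetric])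
  with Cons show ?case by (simp add: idem_def)
qed (simp add: idem_def)

lemma tau_imerge: "tau \<chi> (imerge X Y) = tau \<chi> X * tau \<chi> Y"
  by (cases X; cases Y) simp

lemma tau_iadd_out: "tau \<chi> (iadd X (True, a, Y)) = tau \<chi> X * Mplus (\<chi> a * tau \<chi> Y)"
  by (cases X) simp

lemma tau_iadd_in: "tau \<chi> (iadd X (False, a, Y)) = tau \<chi> X * Mstar (tau \<chi> Y * \<chi> a)"
  by (cases X) simp

lemma rho_Nil [simp]: "rho \<chi> (T, []) = tau \<chi> T"
  by (simp add: rho_def)

lemma rho_Cons: "rho \<chi> (X0, (a, X1) # ps) = tau \<chi> X0 * (\<chi> a * rho \<chi> (X1, ps))"
  by (simp add: rho_def mult.assoc)

lemma rho_tmul: "rho \<chi> (tmul X Y) = rho \<chi> X * rho \<chi> Y"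
proof (induction X Y rule: tmul.induct)
  case (1 X0 Y0 qs)
  then show ?case by (simp add: rho_def tau_imerge mult.assoc)
next
  case (2 X0 a X1 ps Y)
  obtain Z rs where "tmul (X1, ps) Y = (Z, rs)"
    by (cases "tmul (X1, ps) Y")
  with 2 show ?case by (simp add: rho_Cons mult.assoc)
qed

lemma rho_trivial_tree: "rho \<chi> trivial_tree = 1"
  by (simp add: trivial_tree_def)

context
  assumes adequate: "adequate TYPE('m::monoid_mult)"
begin

lemma idem_commute: "idem (e :: 'm) \<Longrightarrow> idem f \<Longrightarrow> e * f = f * e"
  using adequate unfolding adequate_def by blast

lemma Mplus_eqI:
  assumes "idem e" "Rstar_rel (a :: 'm) e"
  shows "Mplus a = e"
  unfolding Mplus_def
proof (rule the_equality)
  fix f assume "idem f \<and> Rstar_rel a f"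
  then show "f = e"
    using assms idem_Rstar_rel_eq idem_commute unfolding Rstar_rel_def by metis
qed (use assms in simp)

lemma Mstar_eqI:
  assumes "idem e" "Lstar_rel (a :: 'm) e"
  shows "Mstar a = e"
  unfolding Mstar_def
proof (rule the_equality)
  fix f assume "idem f \<and> Lstar_rel a f"
  then show "f = e"
    using assms idem_Lstar_rel_eq idem_commute unfolding Lstar_rel_def by metis
qed (use assms in simp)

lemma idem_Mplus: "idem (Mplus (a :: 'm))" and Rstar_rel_Mplus: "Rstar_rel a (Mplus a)"
  using adequate Mplus_eqI unfolding adequate_def by metis+

lemma idem_Mstar: "idem (Mstar (a :: 'm))" and Lstar_rel_Mstar: "Lstar_rel a (Mstar a)"
  using adequate Mstar_eqI unfolding adequate_def by metis+

lemma Mplus_idem: "idem (e :: 'm) \<Longrightarrow> Mplus e = e"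
  by (rule Mplus_eqI) (auto simp: Rstar_rel_def)

lemma Mstar_idem: "idem (e :: 'm) \<Longrightarrow> Mstar e = e"
  by (rule Mstar_eqI) (auto simp: Lstar_rel_def)

lemma Mplus_mult_Mplus: "Mplus ((a :: 'm) * Mplus b) = Mplus (a * b)"
proof (rule Mplus_eqI)
  show "Rstar_rel (a * Mplus b) (Mplus (a * b))"
    using Rstar_rel_mult_left[OF Rstar_rel_Mplus] Rstar_rel_Mplus
    unfolding Rstar_rel_def by metis
qed (rule idem_Mplus)

lemma Mstar_Mstar_mult: "Mstar (Mstar (a :: 'm) * b) = Mstar (a * b)"
proof (rule Mstar_eqI)
  show "Lstar_rel (Mstar a * b) (Mstar (a * b))"
    using Lstar_rel_mult_right[OF Lstar_rel_Mstar] Lstar_rel_Mstar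
    unfolding Lstar_rel_def by metis
qed (rule idem_Mstar)

lemma idem_mult: "idem (e :: 'm) \<Longrightarrow> idem f \<Longrightarrow> idem (e * f)"
  using idem_prod_list[of "[e, f]"] idem_commute by auto

lemma Mplus_idem_mult: "idem (e :: 'm) \<Longrightarrow> Mplus (e * a) = e * Mplus a"
  by (metis Mplus_mult_Mplus Mplus_idem idem_Mplus idem_mult)

lemma Mstar_mult_idem: "idem (e :: 'm) \<Longrightarrow> Mstar (a * e) = Mstar a * e"
  by (metis Mstar_Mstar_mult Mstar_idem idem_Mstar idem_mult)

lemma idem_tau: "idem (tau (\<chi> :: 's \<Rightarrow> 'm) X)"
  by (cases X) (auto intro!: idem_prod_list idem_commute simp: idem_Mplus idem_Mstar)

lemma tau_plus_root: "tau (\<chi> :: 's \<Rightarrow> 'm) (plus_root X0 ps) = Mplus (rho \<chi> (X0, ps))"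
proof (induction X0 ps rule: plus_root.induct)
  case (1 X0)
  show ?case by (simp add: Mplus_idem[OF idem_tau])
next
  case (2 X0 a X1 ps)
  have "tau \<chi> (plus_root X0 ((a, X1) # ps)) = tau \<chi> X0 * Mplus (\<chi> a * Mplus (rho \<chi> (X1, ps)))"
    using 2 by (simp add: tau_iadd_out)
  also have "\<dots> = tau \<chi> X0 * Mplus (\<chi> a * rho \<chi> (X1, ps))"
    by (simp add: Mplus_mult_Mplus)
  also have "\<dots> = Mplus (rho \<chi> (X0, (a, X1) # ps))"
    by (simp add: rho_Cons Mplus_idem_mult[OF idem_tau])
  finally show ?case .
qed

lemma tau_star_acc: "tau (\<chi> :: 's \<Rightarrow> 'm) (star_acc T ps) = Mstar (rho \<chi> (T, ps))"
proof (induction T ps rule: star_acc.induct)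
  case (1 T)
  show ?case by (simp add: Mstar_idem[OF idem_tau])
next
  case (2 T a X ps)
  let ?r = "prod_list (map (\<lambda>p. \<chi> (fst p) * tau \<chi> (snd p)) ps)"
  have "tau \<chi> (star_acc T ((a, X) # ps)) = Mstar (tau \<chi> X * Mstar (tau \<chi> T * \<chi> a) * ?r)"
    using 2 by (simp add: rho_def tau_iadd_in)
  also have "\<dots> = Mstar (Mstar (tau \<chi> T * \<chi> a) * tau \<chi> X * ?r)"
    by (simp add: idem_commute[OF idem_tau idem_Mstar])
  also have "\<dots> = Mstar (Mstar (tau \<chi> T * \<chi> a * tau \<chi> X) * ?r)"
    by (simp add: Mstar_mult_idem[OF idem_tau])
  also have "\<dots> = Mstar (rho \<chi> (T, (a, X) # ps))"
    by (simp add: Mstar_Mstar_mult rho_def mult.assoc)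
  finally show ?case .
qed

lemma rho_tplus: "rho (\<chi> :: 's \<Rightarrow> 'm) (tplus X) = Mplus (rho \<chi> X)"
  by (simp add: tplus_def tau_plus_root)

lemma rho_tstar: "rho (\<chi> :: 's \<Rightarrow> 'm) (tstar X) = Mstar (rho \<chi> X)"
  by (simp add: tstar_def tau_star_acc)

end

theorem proposition5p5:
  fixes \<chi> :: "'s \<Rightarrow> 'm::monoid_mult"
  assumes "adequate TYPE('m)"
  shows "(\<forall>X Y :: 's tree. rho \<chi> (tmul X Y) = rho \<chi> X * rho \<chi> Y)
       \<and> (\<forall>X :: 's tree. rho \<chi> (tplus X) = Mplus (rho \<chi> X))
       \<and> (\<forall>X :: 's tree. rho \<chi> (tstar X) = Mstar (rho \<chi> X))
       \<and> rho \<chi> (trivial_tree :: 's tree) = 1"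
  using rho_tmul rho_tplus[OF assms] rho_tstar[OF assms] rho_trivial_tree by blast

end
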